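(* For any positive integer $n$, \[ \sum_{\sum_i i y_{k,i}=n}\binom{\sum_i y_{k,i}}{y_{k,1},\ldots,y_{k,n}}(-1)^{\sum_i y_{k,i}}\prod_{i=1}^{n}\left[\binom{n}{i}\right]^{y_{k,i}}=(-1)^n\binom{2n-1}{n-1}. \]
   Context: The sum runs over all partitions of $n$, each represented as a tuple $(y_{k,1},\ldots,y_{k,n})$ of non-negative integers with $\sum_{i=1}^n i\,y_{k,i}=n$; sums $\sum_i$ run over $i=1,\ldots,n$. $\binom{N}{a_1,\ldots,a_n}=\frac{N!}{a_1!\cdots a_n!}$ is the multinomial coefficient. *)

theory Defs
  imports Main
begin

text \<open>Partitions of n as multiplicity tuples (y_1,...,y_n): functions nat => nat
  supported on {1..n} with sum of i * y i over i = 1..n equal to n.\<close>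
definition partitions_tuples :: "nat \<Rightarrow> (nat \<Rightarrow> nat) set" where
  "partitions_tuples n = {y. (\<forall>i. i \<notin> {1..n} \<longrightarrow> y i = 0) \<and> (\<Sum>i=1..n. i * y i) = n}"

definition multinomial :: "nat \<Rightarrow> (nat \<Rightarrow> nat) \<Rightarrow> nat" where
  "multinomial n a = fact (\<Sum>i=1..n. a i) div (\<Prod>i=1..n. fact (a i))"

end

theory Submission
  imports Defs "HOL-Combinatorics.Multiset_Permutations" "HOL-Computational_Algebra.Formal_Power_Series"
begin

text \<open>Each partition y of n is the multiset of parts of exactly multinomial n y compositions
  (ordered lists of parts), so the left-hand side is the sum over all compositions of n with parts
  in {1..n} of the product of the weights -(n choose i) of their parts. Splitting off the first part
  gives the recurrence c(m) = - \<Sum>i. (n choose i) c(m - i), c(0) = 1, which for m \<le> n is the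
  recurrence of the coefficients of (1 + x)^(-n), by Vandermonde's identity applied to
  (1 + x)^n (1 + x)^(-n) = 1. Hence c(n) = (-n gchoose n) = (-1)^n (2n - 1 choose n).\<close>

definition bounded_compositions :: "nat \<Rightarrow> nat \<Rightarrow> nat list set" where
  "bounded_compositions n m = {xs. set xs \<subseteq> {1..n} \<and> sum_list xs = m}"

lemma length_le_sum_list: "0 \<notin> set (xs :: nat list) \<Longrightarrow> length xs \<le> sum_list xs"
  by (induction xs) auto

lemma finite_bounded_compositions: "finite (bounded_compositions n m)"
proof (rule finite_subset)
  show "bounded_compositions n m \<subseteq> {xs. set xs \<subseteq> {1..n} \<and> length xs \<le> m}"
    using length_le_sum_list by (force simp: bounded_compositions_def)
  show "finite {xs. set xs \<subseteq> {1..n} \<and> length xs \<le> m}"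
    by (rule finite_lists_length_le) simp
qed

lemma bounded_compositions_0: "bounded_compositions n 0 = {[]}"
proof -
  have "xs = []" if "set xs \<subseteq> {1..n}" "sum_list xs = 0" for xs
    using that by (cases xs) auto
  then show ?thesis
    by (auto simp: bounded_compositions_def)
qed

lemma bounded_compositions_pos:
  assumes "m > 0"
  shows "bounded_compositions n m = (\<Union>i\<in>{1..min n m}. (#) i ` bounded_compositions n (m - i))"
  unfolding bounded_compositions_def
proof (intro set_eqI iffI)
  fix xs assume "xs \<in> {xs. set xs \<subseteq> {1..n} \<and> sum_list xs = m}"
  with assms show "xs \<in> (\<Union>i\<in>{1..min n m}. (#) i ` {xs. set xs \<subseteq> {1..n} \<and> sum_list xs = m - i})"
    by (cases xs) (auto intro!: bexI[where x = "hd xs"])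
qed auto

definition composition_sum :: "(nat \<Rightarrow> 'a::comm_semiring_1) \<Rightarrow> nat \<Rightarrow> nat \<Rightarrow> 'a" where
  "composition_sum w n m = (\<Sum>xs\<in>bounded_compositions n m. prod_list (map w xs))"

lemma composition_sum_0 [simp]: "composition_sum w n 0 = 1"
  by (simp add: composition_sum_def bounded_compositions_0)

lemma composition_sum_pos:
  assumes "m > 0"
  shows "composition_sum w n m = (\<Sum>i=1..min n m. w i * composition_sum w n (m - i))"
proof -
  have "composition_sum w n m
      = (\<Sum>i=1..min n m. \<Sum>xs\<in>(#) i ` bounded_compositions n (m - i). prod_list (map w xs))"
    unfolding composition_sum_def bounded_compositions_pos[OF assms]
    by (rule sum.UNION_disjoint) (auto simp: finite_bounded_compositions)
  also have "\<dots> = (\<Sum>i=1..min n m. w i * composition_sum w n (m - i))"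
    by (simp add: sum.reindex composition_sum_def sum_distrib_left)
  finally show ?thesis .
qed

lemma composition_sum_neg_binomial:
  assumes "m \<le> n"
  shows "composition_sum (\<lambda>i. - of_nat (n choose i)) n m = ((- of_nat n :: 'a::field_char_0) gchoose m)"
  using assms
proof (induction m rule: less_induct)
  case (less m)
  let ?a = "of_nat n :: 'a"
  show ?case
  proof (cases "m = 0")
    case False
    have "0 = (\<Sum>k=0..m. (?a gchoose k) * ((- ?a) gchoose (m - k)))"
      using False by (simp add: gbinomial_Vandermonde gbinomial_0_left)
    also have "\<dots> = ((- ?a) gchoose m) + (\<Sum>k=1..m. (?a gchoose k) * ((- ?a) gchoose (m - k)))"
      by (simp add: sum.atLeast_Suc_atMost)
    also have "(\<Sum>k=1..m. (?a gchoose k) * ((- ?a) gchoose (m - k)))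
        = - composition_sum (\<lambda>i. - of_nat (n choose i)) n m"
      using False less by (auto simp: composition_sum_pos min_absorb2 binomial_gbinomial sum_negf
          intro!: sum.cong)
    finally show ?thesis by (simp add: eq_neg_iff_add_eq_0)
  qed simp
qed

lemma prod_list_map_eq_prod_power_count:
  assumes "set xs \<subseteq> X" "finite X"
  shows "prod_list (map f xs) = (\<Prod>x\<in>X. f x ^ count_list xs x)"
  using assms
proof (induction xs)
  case (Cons a xs)
  have "(\<Prod>x\<in>X. f x ^ count_list (a # xs) x) = (\<Prod>x\<in>X. (if x = a then f x else 1) * f x ^ count_list xs x)"
    by (rule prod.cong) auto
  also have "\<dots> = f a * (\<Prod>x\<in>X. f x ^ count_list xs x)"
    using Cons.prems by (simp add: prod.distrib)
  finally show ?case using Cons by simp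
qed simp

lemma count_list_in_partitions_tuples_iff:
  "count_list xs \<in> partitions_tuples n \<longleftrightarrow> xs \<in> bounded_compositions n n"
proof -
  have "set xs \<subseteq> {1..n} \<longleftrightarrow> (\<forall>i. i \<notin> {1..n} \<longrightarrow> count_list xs i = 0)"
    by (auto simp: count_list_0_iff)
  moreover have "sum_list xs = (\<Sum>i=1..n. i * count_list xs i)" if "set xs \<subseteq> {1..n}"
    using sum_list_map_eq_sum_count2[OF that, of id] by (simp add: mult.commute)
  ultimately show ?thesis
    unfolding partitions_tuples_def bounded_compositions_def by auto
qed

definition multiset_of_tuple :: "nat \<Rightarrow> (nat \<Rightarrow> nat) \<Rightarrow> nat multiset" where
  "multiset_of_tuple n y = (\<Sum>i\<in>{1..n}. replicate_mset (y i) i)"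

lemma count_multiset_of_tuple:
  assumes "\<forall>i. i \<notin> {1..n} \<longrightarrow> y i = 0"
  shows "count (multiset_of_tuple n y) = y"
proof
  fix x
  have "count (multiset_of_tuple n y) x = (\<Sum>i\<in>{1..n}. if i = x then y i else 0)"
    unfolding multiset_of_tuple_def count_sum by (rule sum.cong) auto
  also have "\<dots> = y x"
    using assms by auto
  finally show "count (multiset_of_tuple n y) x = y x" .
qed

lemma card_permutations_of_multiset_of_tuple:
  assumes "\<forall>i. i \<notin> {1..n} \<longrightarrow> y i = 0"
  shows "card (permutations_of_multiset (multiset_of_tuple n y)) = multinomial n y"
proof -
  let ?M = "multiset_of_tuple n y"
  have "set_mset ?M \<subseteq> {1..n}"
    using assms count_multiset_of_tuple[OF assms] by (metis count_eq_zero_iff subsetI)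
  then have "(\<Prod>x\<in>set_mset ?M. fact (count ?M x)) = (\<Prod>i=1..n. fact (count ?M i) :: nat)"
    by (intro prod.mono_neutral_left) (auto simp: not_in_iff)
  moreover have "size ?M = (\<Sum>i=1..n. y i)"
    by (simp add: multiset_of_tuple_def)
  ultimately show ?thesis
    by (simp add: card_permutations_of_multiset(1) multinomial_def count_multiset_of_tuple[OF assms])
qed

lemma partitions_tuples_eq_image_count_list:
  "partitions_tuples n = count_list ` bounded_compositions n n"
proof
  show "partitions_tuples n \<subseteq> count_list ` bounded_compositions n n"
  proof
    fix y assume y: "y \<in> partitions_tuples n"
    obtain xs where "mset xs = multiset_of_tuple n y"
      using ex_mset by blast
    then have "count_list xs = y"
      using y count_multiset_of_tuple by (fastforce simp: partitions_tuples_def simp flip: count_mset)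
    with y show "y \<in> count_list ` bounded_compositions n n"
      using count_list_in_partitions_tuples_iff by blast
  qed
qed (use count_list_in_partitions_tuples_iff in blast)

lemma count_list_fibre_eq_permutations_of_multiset:
  assumes "y \<in> partitions_tuples n"
  shows "{xs \<in> bounded_compositions n n. count_list xs = y}
         = permutations_of_multiset (multiset_of_tuple n y)"
proof -
  have "mset xs = multiset_of_tuple n y \<longleftrightarrow> count_list xs = y" for xs
    using assms count_multiset_of_tuple[of n y]
    by (auto simp: partitions_tuples_def multiset_eq_iff fun_eq_iff simp flip: count_mset)
  then show ?thesis
    using assms count_list_in_partitions_tuples_iff
    by (auto simp: permutations_of_multiset_def)
qed

lemma sum_partitions_tuples_multinomial:
  fixes w :: "nat \<Rightarrow> 'a::comm_semiring_1"
  shows "(\<Sum>y\<in>partitions_tuples n. of_nat (multinomial n y) * (\<Prod>i=1..n. w i ^ y i))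
         = composition_sum w n n"
proof -
  let ?C = "bounded_compositions n n"
  have "of_nat (multinomial n y) * (\<Prod>i=1..n. w i ^ y i)
        = (\<Sum>xs\<in>{xs \<in> ?C. count_list xs = y}. prod_list (map w xs))"
    if y: "y \<in> partitions_tuples n" for y
  proof -
    have "prod_list (map w xs) = (\<Prod>i=1..n. w i ^ y i)" if "xs \<in> {xs \<in> ?C. count_list xs = y}" for xs
      using that prod_list_map_eq_prod_power_count[of xs "{1..n}" w]
      by (auto simp: bounded_compositions_def)
    moreover have "card {xs \<in> ?C. count_list xs = y} = multinomial n y"
      using y by (simp add: count_list_fibre_eq_permutations_of_multiset
          card_permutations_of_multiset_of_tuple partitions_tuples_def)
    ultimately show ?thesis
      by simp
  qed
  then have "(\<Sum>y\<in>partitions_tuples n. of_nat (multinomial n y) * (\<Prod>i=1..n. w i ^ y i))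
        = (\<Sum>y\<in>count_list ` ?C. \<Sum>xs\<in>{xs \<in> ?C. count_list xs = y}. prod_list (map w xs))"
    by (simp add: partitions_tuples_eq_image_count_list)
  also have "\<dots> = composition_sum w n n"
    unfolding composition_sum_def
    by (rule sum.image_gen[symmetric]) (rule finite_bounded_compositions)
  finally show ?thesis .
qed

theorem corollary4p1:
  fixes n :: nat
  assumes "n \<ge> 1"
  shows "(\<Sum>y\<in>partitions_tuples n.
            int (multinomial n y) * (-1) ^ (\<Sum>i=1..n. y i) * (\<Prod>i=1..n. int (n choose i) ^ y i))
         = (-1) ^ n * int ((2 * n - 1) choose (n - 1))"
proof -
  let ?lhs = "\<Sum>y\<in>partitions_tuples n.
            int (multinomial n y) * (-1) ^ (\<Sum>i=1..n. y i) * (\<Prod>i=1..n. int (n choose i) ^ y i)"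
  have "real_of_int ?lhs
      = (\<Sum>y\<in>partitions_tuples n. of_nat (multinomial n y) * (\<Prod>i=1..n. (- real (n choose i)) ^ y i))"
    by (simp add: power_minus' prod.distrib power_sum mult.assoc)
  also have "\<dots> = composition_sum (\<lambda>i. - of_nat (n choose i)) n n"
    by (rule sum_partitions_tuples_multinomial)
  also have "\<dots> = (- real n) gchoose n"
    by (rule composition_sum_neg_binomial) simp
  also have "\<dots> = (-1) ^ n * real ((2 * n - 1) choose (n - 1))"
    using assms binomial_symmetric[of "n - 1" "2 * n - 1"]
    by (simp add: gbinomial_minus binomial_gbinomial)
  finally have "real_of_int ?lhs = real_of_int ((-1) ^ n * int ((2 * n - 1) choose (n - 1)))"
    by simp
  then show ?thesis
    by (simp only: of_int_eq_iff)
qed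

end
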